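(* Let $(X,d)$ be a separable metric space, let $T\colon X\to X$ be a Borel measurable map, and let $\mu,\nu$ be $T$-invariant Borel probability measures on $X$. Let $(s_n)_{n\ge1}$ be a two-jumpy scale sequence. Define \[\phi(x,y)=\liminf_{n\to\infty} s_n\, d(T^n x,y),\qquad \psi(x,y)=\liminf_{n\to\infty} s_n\, d(T^n x,T^n y),\qquad x,y\in X.\] Then both $\phi$ and $\psi$ take values in $\{0,\infty\}$ for $\mu\times\nu$-almost every $(x,y)\in X\times X$. In particular, for every $\alpha>0$ this holds for the gauges $\phi_\alpha(x,y)=\liminf_{n} n^\alpha d(T^nx,y)$ and $\psi_\alpha(x,y)=\liminf_n n^\alpha d(T^nx,T^ny)$.
   Context: A scale sequence is a sequence $(s_n)_{n\ge1}$ of positive reals with $s_n\to\infty$. It is two-jumpy if $s_{n+1}\ge s_n$ for all sufficiently large $n$ and $\liminf_{n\to\infty} s_{2n}/s_n>1$. A measure $\mu$ is $T$-invariant if $\mu(T^{-1}B)=\mu(B)$ for all Borel sets $B$. *)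

theory Defs
  imports "HOL-Probability.Probability"
begin

definition scale_seq :: "(nat \<Rightarrow> real) \<Rightarrow> bool" where
  "scale_seq s \<longleftrightarrow> (\<forall>n\<ge>1. s n > 0) \<and> filterlim s at_top sequentially"

definition two_jumpy :: "(nat \<Rightarrow> real) \<Rightarrow> bool" where
  "two_jumpy s \<longleftrightarrow> (\<forall>\<^sub>F n in sequentially. s (Suc n) \<ge> s n)
      \<and> liminf (\<lambda>n. ereal (s (2 * n) / s n)) > 1"

definition T_invariant :: "('a \<Rightarrow> 'a) \<Rightarrow> 'a measure \<Rightarrow> bool" where
  "T_invariant T M \<longleftrightarrow> (\<forall>B \<in> sets M. emeasure M (T -` B \<inter> space M) = emeasure M B)"

definition gauge_phi :: "(nat \<Rightarrow> real) \<Rightarrow> ('a::metric_space \<Rightarrow> 'a) \<Rightarrow> 'a \<Rightarrow> 'a \<Rightarrow> ereal" where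
  "gauge_phi s T x y = liminf (\<lambda>n. ereal (s n * dist ((T ^^ n) x) y))"

definition gauge_psi :: "(nat \<Rightarrow> real) \<Rightarrow> ('a::metric_space \<Rightarrow> 'a) \<Rightarrow> 'a \<Rightarrow> 'a \<Rightarrow> ereal" where
  "gauge_psi s T x y = liminf (\<lambda>n. ereal (s n * dist ((T ^^ n) x) ((T ^^ n) y)))"

end

theory Submission
  imports Defs
begin

text \<open>Both gauges are instances of \<Phi> z = liminf s(n) \<rho>(S^n z) for a measure-preserving map S of
  X \<times> X with \<rho> the distance between the two coordinates: S = T \<times> id gives \<phi>, S = T \<times> T gives \<psi>.
  Since s is eventually increasing, \<Phi> \<circ> S \<le> \<Phi>, so \<Phi> is invariant along almost every orbit.
  Suppose \<Phi> takes values in a band (L, c' L) on a set E, where 1 < c' < c < liminf s(2n) / s(n).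
  The doubling property shows that every orbit staying in E visits, with frequency at least 1/4, the
  points of E where s(m) \<rho>(S^m \<cdot>) is small for some m \<ge> t; as these sets shrink to the empty set
  when t \<rightarrow> \<infinity>, the maximal ergodic inequality forces E to be null. Countably many rational bands
  cover (0, \<infinity>).\<close>

lemma card_blocks_le_sum:
  fixes a :: "nat \<Rightarrow> real" and lam :: real
  assumes a_nonneg: "\<And>i. 0 \<le> a i" and lam: "0 < lam"
  shows "lam * card {i\<in>{j..<H}. \<exists>n\<in>{1..N}. lam * n \<le> (\<Sum>k\<in>{i..<i+n}. a k)}
           \<le> (\<Sum>k\<in>{j..<H+N}. a k)"
proof (induction "H - j" arbitrary: j rule: less_induct)
  case less
  define G where "G = {i. \<exists>n\<in>{1..N}. lam * n \<le> (\<Sum>k\<in>{i..<i+n}. a k)}"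
  have G_eq: "{i\<in>{j'..<H}. \<exists>n\<in>{1..N}. lam * n \<le> (\<Sum>k\<in>{i..<i+n}. a k)} = {j'..<H} \<inter> G" for j'
    by (auto simp: G_def)
  show ?case
  proof (cases "j < H")
    case False
    then show ?thesis using a_nonneg by (simp add: sum_nonneg)
  next
    case j_lt: True
    show ?thesis
    proof (cases "j \<in> G")
      case False
      then have "{j..<H} \<inter> G = {Suc j..<H} \<inter> G" by (auto simp: Suc_le_eq le_less)
      moreover have "(\<Sum>k\<in>{Suc j..<H+N}. a k) \<le> (\<Sum>k\<in>{j..<H+N}. a k)"
        by (rule sum_mono2) (use a_nonneg in auto)
      moreover have "lam * card ({Suc j..<H} \<inter> G) \<le> (\<Sum>k\<in>{Suc j..<H+N}. a k)"
        using less[of "Suc j"] j_lt G_eq by auto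
      ultimately show ?thesis using G_eq by simp
    next
      case True
      then obtain n where n: "n \<in> {1..N}" "lam * n \<le> (\<Sum>k\<in>{j..<j+n}. a k)"
        by (auto simp: G_def)
      have "card ({j..<H} \<inter> G) \<le> card ({j..<j+n} \<union> ({j+n..<H} \<inter> G))"
        by (rule card_mono) auto
      also have "\<dots> \<le> n + card ({j+n..<H} \<inter> G)"
        using card_Un_le[of "{j..<j+n}" "{j+n..<H} \<inter> G"] by simp
      finally have card_le: "lam * card ({j..<H} \<inter> G) \<le> lam * n + lam * card ({j+n..<H} \<inter> G)"
        using lam by (simp flip: distrib_left)
      have IH: "lam * card ({j+n..<H} \<inter> G) \<le> (\<Sum>k\<in>{j+n..<H+N}. a k)"
        using less[of "j+n"] j_lt n G_eq by auto
      have "(\<Sum>k\<in>{j..<H+N}. a k) = (\<Sum>k\<in>{j..<j+n}. a k) + (\<Sum>k\<in>{j+n..<H+N}. a k)"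
        using j_lt n by (intro sum.atLeastLessThan_concat[symmetric]) auto
      then show ?thesis using G_eq card_le IH n by simp
    qed
  qed
qed

lemma ereal_rat_between:
  fixes a b :: ereal
  assumes "a < b"
  obtains q :: rat where "a < ereal (of_rat q)" "ereal (of_rat q) < b"
proof -
  obtain x where x: "a < ereal x" "ereal x < b" using ereal_dense2[OF assms] by blast
  obtain y where y: "a < ereal y" "ereal y < ereal x" using ereal_dense2[OF x(1)] by blast
  obtain r where "r \<in> \<rat>" "y < r" "r < x" using Rats_dense_in_real y(2) by auto
  then obtain q where "ereal y < ereal (of_rat q)" "ereal (of_rat q) < ereal x" by (auto elim: Rats_cases)
  with x y show ?thesis by (meson that less_trans)
qed

lemma ereal_zero_or_infinity_if_no_rat_band:
  fixes x :: ereal and c :: real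
  assumes nonneg: "0 \<le> x" and c: "1 < c"
    and no_band: "\<And>q::rat. 0 < q \<Longrightarrow> \<not> (ereal (of_rat q) < x \<and> x < ereal (c * of_rat q))"
  shows "x \<in> {0, \<infinity>}"
proof (rule ccontr)
  assume "x \<notin> {0, \<infinity>}"
  with nonneg obtain r where r: "x = ereal r" "0 < r" by (cases x) auto
  then have "ereal (r / c) < x" using c by (simp add: divide_less_eq)
  then obtain q :: rat where q: "ereal (r / c) < ereal (of_rat q)" "ereal (of_rat q) < x"
    by (rule ereal_rat_between)
  have "0 < r / c" "r / c < of_rat q" using r c q(1) by auto
  then have "0 < real_of_rat q" by linarith
  then have "0 < q" by simp
  moreover have "x < ereal (c * of_rat q)" using q(1) r c by (simp add: divide_less_eq mult.commute)
  ultimately show False using q no_band by blast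
qed

lemma liminf_scaled_shift_le:
  fixes s u :: "nat \<Rightarrow> real"
  assumes s_mono: "\<forall>\<^sub>F n in sequentially. s n \<le> s (Suc n)" and u_nonneg: "\<And>n. 0 \<le> u n"
  shows "liminf (\<lambda>n. ereal (s n * u (Suc n))) \<le> liminf (\<lambda>n. ereal (s n * u n))"
proof -
  have "liminf (\<lambda>n. ereal (s n * u (Suc n))) \<le> liminf (\<lambda>n. ereal (s (Suc n) * u (Suc n)))"
    using s_mono by (intro Liminf_mono) (auto elim!: eventually_mono intro: mult_right_mono u_nonneg)
  also have "\<dots> = liminf (\<lambda>n. ereal (s n * u n))"
    using liminf_shift[of "\<lambda>n. ereal (s n * u n)"] by simp
  finally show ?thesis .
qed

locale prob_mpt = prob_space P for P :: "'b measure" +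
  fixes S :: "'b \<Rightarrow> 'b"
  assumes measurable_map: "S \<in> measurable P P" and distr_map: "distr P P S = P"
begin

lemma measurable_iterate: "S ^^ n \<in> measurable P P"
  by (rule measurable_compose_n[OF measurable_map])

lemma distr_iterate: "distr P P (S ^^ n) = P"
proof (induction n)
  case 0
  then show ?case by (simp add: distr_id[unfolded id_def])
next
  case (Suc n)
  have "distr P P (S ^^ Suc n) = distr P P ((S ^^ n) \<circ> S)"
    by (simp only: funpow_Suc_right)
  also have "\<dots> = distr (distr P P S) P (S ^^ n)"
    by (rule distr_distr[symmetric, OF measurable_iterate measurable_map])
  also have "\<dots> = P" using Suc distr_map by simp
  finally show ?case .
qed

lemma iterate_in_space: "z \<in> space P \<Longrightarrow> (S ^^ n) z \<in> space P"
  using measurable_iterate[of n] by (auto simp: measurable_def)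

lemma integral_iterate:
  fixes f :: "'b \<Rightarrow> real"
  assumes "f \<in> borel_measurable P"
  shows "(\<integral>z. f ((S ^^ n) z) \<partial>P) = (\<integral>z. f z \<partial>P)"
  using integral_distr[OF measurable_iterate assms, of n] distr_iterate[of n] by simp

lemma maximal_set_visits_le:
  fixes lam :: real
  assumes lam: "0 < lam" and z: "z \<in> space P"
    and F_def: "F = {w\<in>space P. \<exists>n\<in>{1..N}. lam * n \<le> (\<Sum>i<n. indicator A ((S ^^ i) w))}"
  shows "lam * (\<Sum>j<H. indicator F ((S ^^ j) z)) \<le> (\<Sum>j<H+N. indicator A ((S ^^ j) z))"
proof -
  define a where "a k = (indicator A ((S ^^ k) z) :: real)" for k
  have F_iff: "(S ^^ j) z \<in> F \<longleftrightarrow> (\<exists>n\<in>{1..N}. lam * n \<le> (\<Sum>k\<in>{j..<j+n}. a k))" for j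
  proof -
    have "(\<Sum>k\<in>{j..<j+n}. a k) = (\<Sum>i<n. indicator A ((S ^^ i) ((S ^^ j) z)))" for n
      using sum.shift_bounds_nat_ivl[of a 0 j n]
      by (simp add: a_def funpow_add lessThan_atLeast0 add.commute)
    then show ?thesis using iterate_in_space[OF z] by (simp add: F_def)
  qed
  have "(\<Sum>j<H. indicator F ((S ^^ j) z)) = real (card {j\<in>{0..<H}. (S ^^ j) z \<in> F})"
    by (simp add: indicator_def sum.If_cases lessThan_atLeast0 Int_def)
  also have "\<dots> = card {i\<in>{0..<H}. \<exists>n\<in>{1..N}. lam * n \<le> (\<Sum>k\<in>{i..<i+n}. a k)}"
    using F_iff by simp
  finally show ?thesis
    using card_blocks_le_sum[of a lam 0 H N] lam by (simp add: a_def lessThan_atLeast0)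
qed

lemma integrable_visit:
  assumes "B \<in> sets P"
  shows "integrable P (\<lambda>z. indicator B ((S ^^ j) z) :: real)"
proof (rule integrable_const_bound[where B=1])
  show "(\<lambda>z. indicator B ((S ^^ j) z) :: real) \<in> borel_measurable P"
    using assms measurable_iterate by measurable
qed (rule AE_I2, simp add: indicator_def)

lemma integral_visit_count:
  fixes H :: nat
  assumes B: "B \<in> sets P"
  shows "(\<integral>z. (\<Sum>j<H. indicator B ((S ^^ j) z) :: real) \<partial>P) = H * measure P B"
proof -
  have "(\<integral>z. (\<Sum>j<H. indicator B ((S ^^ j) z) :: real) \<partial>P)
      = (\<Sum>j<H. \<integral>z. indicator B ((S ^^ j) z) \<partial>P)"
    using integrable_visit[OF B] by (rule Bochner_Integration.integral_sum)
  also have "\<dots> = H * measure P B"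
    using B by (simp add: integral_iterate borel_measurable_indicator Int_absorb2 sets.sets_into_space)
  finally show ?thesis .
qed

lemma maximal_ergodic_indicator_bounded:
  fixes lam :: real
  assumes A: "A \<in> sets P" and lam: "0 < lam"
  shows "measure P {z\<in>space P. \<exists>n\<in>{1..N}. lam * n \<le> (\<Sum>i<n. indicator A ((S ^^ i) z))}
           \<le> measure P A / lam"
proof -
  define F where "F = {z\<in>space P. \<exists>n\<in>{1..N}. lam * n \<le> (\<Sum>i<n. indicator A ((S ^^ i) z))}"
  have F: "F \<in> sets P"
    unfolding F_def using A measurable_iterate by measurable
  have integrated: "lam * (H * measure P F) \<le> (H + N) * measure P A" for H :: nat
  proof -
    have "lam * (H * measure P F) = (\<integral>z. lam * (\<Sum>j<H. indicator F ((S ^^ j) z)) \<partial>P)"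
      using integral_visit_count[OF F] by simp
    also have "\<dots> \<le> (\<integral>z. (\<Sum>j<H+N. indicator A ((S ^^ j) z)) \<partial>P)"
    proof (rule integral_mono)
      show "integrable P (\<lambda>z. lam * (\<Sum>j<H. indicator F ((S ^^ j) z)))"
        using integrable_visit[OF F] by (intro integrable_mult_right Bochner_Integration.integrable_sum)
      show "integrable P (\<lambda>z. \<Sum>j<H+N. indicator A ((S ^^ j) z) :: real)"
        using integrable_visit[OF A] by (rule Bochner_Integration.integrable_sum)
    qed (rule maximal_set_visits_le[OF lam _ F_def])
    also have "\<dots> = (H + N) * measure P A"
      using integral_visit_count[OF A] by simp
    finally show ?thesis .
  qed
  have "lam * measure P F \<le> measure P A"
  proof (rule ccontr)
    assume "\<not> ?thesis"
    then have gap: "0 < lam * measure P F - measure P A" by simp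
    obtain H :: nat where "N * measure P A / (lam * measure P F - measure P A) < H"
      using reals_Archimedean2 by blast
    with gap have "N * measure P A < H * (lam * measure P F - measure P A)"
      by (simp add: divide_less_eq mult.commute)
    with integrated[of H] show False by (simp add: algebra_simps)
  qed
  then show ?thesis using lam unfolding F_def by (simp add: le_divide_eq mult.commute)
qed

theorem maximal_ergodic_indicator:
  fixes lam :: real
  assumes A: "A \<in> sets P" and lam: "0 < lam"
  shows "measure P {z\<in>space P. \<exists>n\<ge>1. lam * n \<le> (\<Sum>i<n. indicator A ((S ^^ i) z))} \<le> measure P A / lam"
proof -
  define F where "F N = {z\<in>space P. \<exists>n\<in>{1..N}. lam * n \<le> (\<Sum>i<n. indicator A ((S ^^ i) z))}" for N
  have "F N \<in> sets P" for N
    unfolding F_def using A measurable_iterate by measurable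
  then have F: "range F \<subseteq> sets P" by blast
  have "incseq F"
    unfolding incseq_def F_def by (auto intro: order_trans)
  with F have "(\<lambda>N. measure P (F N)) \<longlonglongrightarrow> measure P (\<Union>N. F N)"
    by (intro finite_Lim_measure_incseq) auto
  moreover have "(\<Union>N. F N) = {z\<in>space P. \<exists>n\<ge>1. lam * n \<le> (\<Sum>i<n. indicator A ((S ^^ i) z))}"
    by (auto simp: F_def) (meson atLeastAtMost_iff order_refl)
  ultimately show ?thesis
    using maximal_ergodic_indicator_bounded[OF A lam] by (intro LIMSEQ_le_const2) (auto simp: F_def)
qed

lemma AE_subinvariant_eq:
  fixes f :: "'b \<Rightarrow> ereal"
  assumes f: "f \<in> borel_measurable P" and sub: "\<And>z. z \<in> space P \<Longrightarrow> f (S z) \<le> f z"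
  shows "AE z in P. f (S z) = f z"
proof -
  have "AE z in P. f (S z) < ereal (of_rat q) \<longrightarrow> f z < ereal (of_rat q)" for q
  proof -
    define B where "B = {z\<in>space P. f z < ereal (of_rat q)}"
    define C where "C = S -` B \<inter> space P"
    have B: "B \<in> sets P" unfolding B_def using f by measurable
    have C: "C \<in> sets P" unfolding C_def by (rule measurable_sets[OF measurable_map B])
    have "B \<subseteq> C"
      unfolding B_def C_def using sub measurable_space[OF measurable_map] by (auto intro: le_less_trans)
    moreover have "measure P C = measure P B"
      unfolding C_def using measure_distr[OF measurable_map B] distr_map by simp
    ultimately have "C - B \<in> null_sets P"
      using B C finite_measure_Diff by (auto simp: emeasure_eq_measure null_sets_def)
    moreover have "{z\<in>space P. \<not> (f (S z) < ereal (of_rat q) \<longrightarrow> f z < ereal (of_rat q))} \<subseteq> C - B"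
      unfolding B_def C_def using measurable_space[OF measurable_map] by auto
    ultimately show ?thesis by (rule AE_I')
  qed
  then have "AE z in P. \<forall>q. f (S z) < ereal (of_rat q) \<longrightarrow> f z < ereal (of_rat q)"
    by (simp add: AE_all_countable)
  then show ?thesis
  proof (rule AE_mp, intro AE_I2 impI)
    fix z assume z: "z \<in> space P" and rat: "\<forall>q. f (S z) < ereal (of_rat q) \<longrightarrow> f z < ereal (of_rat q)"
    show "f (S z) = f z"
    proof (rule ccontr)
      assume "f (S z) \<noteq> f z"
      with sub[OF z] have "f (S z) < f z" by simp
      then obtain q where "f (S z) < ereal (of_rat q)" "ereal (of_rat q) < f z"
        by (rule ereal_rat_between)
      with rat show False by auto
    qed
  qed
qed

lemma AE_subinvariant_orbit_eq:
  fixes f :: "'b \<Rightarrow> ereal"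
  assumes f: "f \<in> borel_measurable P" and sub: "\<And>z. z \<in> space P \<Longrightarrow> f (S z) \<le> f z"
  shows "AE z in P. \<forall>j. f ((S ^^ j) z) = f z"
proof -
  have "AE z in P. f (S ((S ^^ j) z)) = f ((S ^^ j) z)" for j
  proof (rule AE_distrD[OF measurable_iterate])
    show "AE z in distr P P (S ^^ j). f (S z) = f z"
      unfolding distr_iterate by (rule AE_subinvariant_eq[OF f sub])
  qed
  then have "AE z in P. \<forall>j. f (S ((S ^^ j) z)) = f ((S ^^ j) z)"
    by (simp add: AE_all_countable)
  then show ?thesis
  proof (rule AE_mp, intro AE_I2 impI allI)
    fix z j assume "\<forall>j. f (S ((S ^^ j) z)) = f ((S ^^ j) z)"
    then show "f ((S ^^ j) z) = f z" by (induction j) auto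
  qed
qed

end

locale doubling_gauge = prob_mpt P S for P :: "'b measure" and S +
  fixes s :: "nat \<Rightarrow> real" and \<rho> :: "'b \<Rightarrow> real" and c :: real and N0 :: nat
  assumes rho_measurable: "\<rho> \<in> borel_measurable P" and rho_nonneg: "\<And>z. 0 \<le> \<rho> z"
    and doubling_gt_1: "1 < c"
    and scale_nonneg: "\<And>n. N0 \<le> n \<Longrightarrow> 0 \<le> s n"
    and scale_mono: "\<And>m n. N0 \<le> m \<Longrightarrow> m \<le> n \<Longrightarrow> s m \<le> s n"
    and scale_doubling: "\<And>m. N0 \<le> m \<Longrightarrow> c * s m \<le> s (2 * m)"
begin

definition orbit_gauge :: "'b \<Rightarrow> ereal" where
  "orbit_gauge z = liminf (\<lambda>n. ereal (s n * \<rho> ((S ^^ n) z)))"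

lemma borel_measurable_orbit_gauge: "orbit_gauge \<in> borel_measurable P"
proof -
  have "(\<lambda>z. ereal (s n * \<rho> ((S ^^ n) z))) \<in> borel_measurable P" for n
    using measurable_compose[OF measurable_iterate rho_measurable] by measurable
  then show ?thesis
    unfolding orbit_gauge_def[abs_def] by (rule borel_measurable_liminf)
qed

lemma orbit_gauge_nonneg: "0 \<le> orbit_gauge z"
  unfolding orbit_gauge_def
  by (rule Liminf_bounded) (auto simp: eventually_sequentially intro!: exI[of _ N0] mult_nonneg_nonneg scale_nonneg rho_nonneg)

lemma orbit_gauge_map_le: "orbit_gauge (S z) \<le> orbit_gauge z"
proof -
  have "\<forall>\<^sub>F n in sequentially. s n \<le> s (Suc n)"
    using scale_mono by (auto simp: eventually_sequentially intro!: exI[of _ N0])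
  then have "liminf (\<lambda>n. ereal (s n * \<rho> ((S ^^ Suc n) z))) \<le> orbit_gauge z"
    unfolding orbit_gauge_def by (rule liminf_scaled_shift_le) (rule rho_nonneg)
  then show ?thesis
    by (simp add: orbit_gauge_def funpow_swap1)
qed

lemma AE_orbit_gauge_invariant: "AE z in P. \<forall>j. orbit_gauge ((S ^^ j) z) = orbit_gauge z"
  using AE_subinvariant_orbit_eq[OF borel_measurable_orbit_gauge orbit_gauge_map_le] .

definition low_set :: "'b set \<Rightarrow> real \<Rightarrow> nat \<Rightarrow> 'b set" where
  "low_set E L t = {w \<in> E. \<exists>m\<ge>t. s m * \<rho> ((S ^^ m) w) < L}"

lemma low_set_in_sets: "E \<in> sets P \<Longrightarrow> low_set E L t \<in> sets P"
  unfolding low_set_def using measurable_compose[OF measurable_iterate rho_measurable] by measurable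

lemma measure_low_set_tendsto_0:
  assumes E: "E \<in> sets P" and above: "\<And>w. w \<in> E \<Longrightarrow> ereal L < orbit_gauge w"
  shows "(\<lambda>t. measure P (low_set E L t)) \<longlonglongrightarrow> 0"
proof -
  have "(\<Inter>t. low_set E L t) = {}"
  proof (intro equalityI subsetI)
    fix w assume "w \<in> (\<Inter>t. low_set E L t)"
    then have w: "w \<in> E" and low: "\<And>t. \<exists>m\<ge>t. s m * \<rho> ((S ^^ m) w) < L"
      by (auto simp: low_set_def)
    from above[OF w] have "\<forall>\<^sub>F m in sequentially. ereal L < ereal (s m * \<rho> ((S ^^ m) w))"
      unfolding orbit_gauge_def by (rule less_LiminfD)
    then obtain t where "\<And>m. t \<le> m \<Longrightarrow> L < s m * \<rho> ((S ^^ m) w)"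
      by (auto simp: eventually_sequentially)
    with low[of t] show "w \<in> {}" by force
  qed simp
  moreover have "decseq (low_set E L)"
    unfolding decseq_def low_set_def by (auto intro: order_trans)
  ultimately show ?thesis
    using low_set_in_sets[OF E] finite_Lim_measure_decseq[of "low_set E L"] by (simp add: image_subset_iff)
qed

text \<open>Pick n with s(n) \<rho>(S^n z) < L2. For T0 \<le> m \<le> n/2 doubling gives c s(m) \<le> s(n), so the orbit
  point (S ^^ (n - m)) z reaches (S ^^ n) z after m steps with scaled value below L2 / c \<le> L0.
  These are about n/4 of the first n points of the orbit.\<close>
lemma frequent_low_visits:
  fixes L0 L2 :: real and t :: nat
  assumes orbit: "\<And>j. (S ^^ j) z \<in> E" and below: "orbit_gauge z < ereal L2" and L: "L2 \<le> c * L0"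
  shows "\<exists>n\<ge>1. n / 4 \<le> (\<Sum>i<n. indicator (low_set E L0 t) ((S ^^ i) z))"
proof -
  define T0 where "T0 = Suc (max t N0)"
  have "\<exists>n\<ge>4 * T0. s n * \<rho> ((S ^^ n) z) < L2"
  proof (rule ccontr)
    assume "\<not> ?thesis"
    then have "\<forall>\<^sub>F n in sequentially. ereal L2 \<le> ereal (s n * \<rho> ((S ^^ n) z))"
      by (auto simp: eventually_sequentially not_less)
    then have "ereal L2 \<le> orbit_gauge z"
      unfolding orbit_gauge_def by (rule Liminf_bounded)
    with below show False by simp
  qed
  then obtain n where n: "4 * T0 \<le> n" "s n * \<rho> ((S ^^ n) z) < L2" by blast
  define J where "J = {n - n div 2..n - T0}"
  have low: "(S ^^ j) z \<in> low_set E L0 t" if "j \<in> J" for j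
  proof -
    define m where "m = n - j"
    have m: "T0 \<le> m" "2 * m \<le> n" "m + j = n"
      using that n(1) by (auto simp: J_def m_def)
    then have orbit_n: "(S ^^ m) ((S ^^ j) z) = (S ^^ n) z"
      by (metis comp_apply funpow_add)
    have "N0 \<le> m" using m(1) by (simp add: T0_def)
    then have "c * s m \<le> s n"
      using scale_doubling[of m] scale_mono[of "2 * m" n] m(2) by force
    then have "c * (s m * \<rho> ((S ^^ n) z)) \<le> s n * \<rho> ((S ^^ n) z)"
      using mult_right_mono[OF _ rho_nonneg, of "c * s m" "s n"] by (simp add: mult.assoc)
    also have "\<dots> < c * L0"
      using n(2) L by linarith
    finally have "s m * \<rho> ((S ^^ m) ((S ^^ j) z)) < L0"
      using doubling_gt_1 orbit_n by simp
    with m(1) orbit show ?thesis by (auto simp: low_set_def T0_def intro!: exI[of _ m])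
  qed
  have "n / 4 \<le> card J"
    using n(1) by (simp add: J_def T0_def)
  also have "\<dots> = (\<Sum>i\<in>J. indicator (low_set E L0 t) ((S ^^ i) z))"
    using low by simp
  also have "\<dots> \<le> (\<Sum>i<n. indicator (low_set E L0 t) ((S ^^ i) z))"
    using n(1) by (intro sum_mono2) (auto simp: J_def T0_def)
  finally show ?thesis using n(1) by (intro exI[of _ n]) (simp add: T0_def)
qed

lemma AE_orbit_gauge_not_in_band:
  fixes L1 L2 :: real
  assumes L2: "L2 < c * L1"
  shows "AE z in P. \<not> (ereal L1 < orbit_gauge z \<and> orbit_gauge z < ereal L2)"
proof -
  define L0 where "L0 = (L2 / c + L1) / 2"
  have L0: "L0 < L1" "L2 \<le> c * L0"
    using L2 doubling_gt_1 by (auto simp: L0_def field_simps)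
  define E where "E = {z \<in> space P. ereal L1 < orbit_gauge z \<and> orbit_gauge z < ereal L2}"
  define G where "G = {z \<in> space P. \<forall>j. orbit_gauge ((S ^^ j) z) = orbit_gauge z}"
  have E: "E \<in> sets P"
    unfolding E_def using borel_measurable_orbit_gauge by measurable
  have G: "G \<in> sets P"
    unfolding G_def using borel_measurable_orbit_gauge measurable_compose[OF measurable_iterate borel_measurable_orbit_gauge]
    by measurable
  have "measure P (E \<inter> G) \<le> 4 * measure P (low_set E L0 t)" for t
  proof -
    define V where "V = {z \<in> space P. \<exists>n\<ge>1. (1/4) * n \<le> (\<Sum>i<n. indicator (low_set E L0 t) ((S ^^ i) z))}"
    have V: "V \<in> sets P"
      unfolding V_def using low_set_in_sets[OF E] measurable_iterate by measurable
    have "E \<inter> G \<subseteq> V"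
    proof
      fix z assume z: "z \<in> E \<inter> G"
      then have "(S ^^ j) z \<in> E" "orbit_gauge z < ereal L2" for j
        by (auto simp: E_def G_def iterate_in_space)
      from frequent_low_visits[OF this L0(2), of t] z show "z \<in> V"
        by (simp add: V_def E_def)
    qed
    then have "measure P (E \<inter> G) \<le> measure P V"
      by (rule finite_measure_mono[OF _ V])
    also have "\<dots> \<le> measure P (low_set E L0 t) / (1/4)"
      unfolding V_def by (rule maximal_ergodic_indicator[OF low_set_in_sets[OF E]]) simp
    finally show ?thesis by simp
  qed
  moreover have "(\<lambda>t. measure P (low_set E L0 t)) \<longlonglongrightarrow> 0"
  proof (rule measure_low_set_tendsto_0[OF E])
    fix w assume "w \<in> E"
    then have "ereal L1 < orbit_gauge w" by (simp add: E_def)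
    moreover have "ereal L0 < ereal L1" using L0(1) by simp
    ultimately show "ereal L0 < orbit_gauge w" by (rule less_trans[rotated])
  qed
  ultimately have "measure P (E \<inter> G) \<le> 0"
    by (intro LIMSEQ_le_const[OF tendsto_mult_right_zero]) auto
  with E G have "AE z in P. z \<notin> E \<inter> G"
    by (intro AE_not_in) (auto simp: emeasure_eq_measure null_sets_def intro!: antisym)
  then show ?thesis
    using AE_orbit_gauge_invariant AE_space by eventually_elim (auto simp: E_def G_def)
qed

theorem AE_orbit_gauge_zero_or_infinity: "AE z in P. orbit_gauge z \<in> {0, \<infinity>}"
proof -
  define c' where "c' = (1 + c) / 2"
  have c': "1 < c'" "c' < c"
    using doubling_gt_1 by (auto simp: c'_def)
  have "AE z in P. 0 < q \<longrightarrow> \<not> (ereal (of_rat q) < orbit_gauge z \<and> orbit_gauge z < ereal (c' * of_rat q))" for q :: rat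
    using AE_orbit_gauge_not_in_band[of "c' * of_rat q" "of_rat q"] c'(2) by (cases "0 < q") auto
  then have "AE z in P. \<forall>q::rat. 0 < q \<longrightarrow> \<not> (ereal (of_rat q) < orbit_gauge z \<and> orbit_gauge z < ereal (c' * of_rat q))"
    by (simp add: AE_all_countable)
  then show ?thesis
    by eventually_elim (intro ereal_zero_or_infinity_if_no_rat_band[OF orbit_gauge_nonneg c'(1)], auto)
qed

end

lemma two_jumpy_doubling:
  fixes s :: "nat \<Rightarrow> real"
  assumes pos: "\<forall>\<^sub>F n in sequentially. 0 < s n" and jumpy: "two_jumpy s"
  obtains c N0 where "1 < c" "\<And>n. N0 \<le> n \<Longrightarrow> 0 \<le> s n" "\<And>m n. N0 \<le> m \<Longrightarrow> m \<le> n \<Longrightarrow> s m \<le> s n"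
    "\<And>m. N0 \<le> m \<Longrightarrow> c * s m \<le> s (2 * m)"
proof -
  have mono: "\<forall>\<^sub>F n in sequentially. s n \<le> s (Suc n)"
    and ratio: "1 < liminf (\<lambda>n. ereal (s (2 * n) / s n))"
    using jumpy by (auto simp: two_jumpy_def)
  obtain c where c: "1 < c" "ereal c < liminf (\<lambda>n. ereal (s (2 * n) / s n))"
    using ereal_dense2[OF ratio] by auto
  have "\<forall>\<^sub>F n in sequentially. ereal c < ereal (s (2 * n) / s n)"
    by (rule less_LiminfD[OF c(2)])
  with pos mono have "\<forall>\<^sub>F n in sequentially. 0 < s n \<and> s n \<le> s (Suc n) \<and> c * s n < s (2 * n)"
    by eventually_elim (simp add: less_divide_eq)
  then obtain N0 where N0: "\<And>n. N0 \<le> n \<Longrightarrow> 0 < s n \<and> s n \<le> s (Suc n) \<and> c * s n < s (2 * n)"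
    by (auto simp: eventually_sequentially)
  have "s m \<le> s n" if "N0 \<le> m" "m \<le> n" for m n
    using that(2) by (induction n rule: dec_induct) (use N0 that(1) in \<open>auto intro: order_trans\<close>)
  with N0 c(1) show ?thesis
    by (intro that[of c N0]) (auto intro: less_imp_le)
qed

theorem (in prob_mpt) AE_liminf_scaled_orbit_zero_or_infinity:
  fixes \<rho> :: "'b \<Rightarrow> real" and s :: "nat \<Rightarrow> real"
  assumes "\<rho> \<in> borel_measurable P" "\<And>z. 0 \<le> \<rho> z"
    and "\<forall>\<^sub>F n in sequentially. 0 < s n" "two_jumpy s"
  shows "AE z in P. liminf (\<lambda>n. ereal (s n * \<rho> ((S ^^ n) z))) \<in> {0, \<infinity>}"
proof -
  obtain c N0 where "1 < c" "\<And>n. N0 \<le> n \<Longrightarrow> 0 \<le> s n" "\<And>m n. N0 \<le> m \<Longrightarrow> m \<le> n \<Longrightarrow> s m \<le> s n"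
    "\<And>m. N0 \<le> m \<Longrightarrow> c * s m \<le> s (2 * m)"
    using two_jumpy_doubling[OF assms(3,4)] by blast
  then interpret doubling_gauge P S s \<rho> c N0
    using assms(1,2) by unfold_locales auto
  show ?thesis
    using AE_orbit_gauge_zero_or_infinity by (simp add: orbit_gauge_def)
qed

lemma prob_mpt_if_T_invariant:
  assumes "prob_space M" "T \<in> measurable M M" "T_invariant T M"
  shows "prob_mpt M T"
proof (intro prob_mpt.intro prob_mpt_axioms.intro)
  show "distr M M T = M"
    by (rule measure_eqI) (use assms in \<open>auto simp: emeasure_distr T_invariant_def\<close>)
qed (use assms in auto)

lemma funpow_map_prod_apply:
  fixes f :: "'a \<Rightarrow> 'a" and g :: "'b \<Rightarrow> 'b"
  shows "(map_prod f g ^^ n) z = ((f ^^ n) (fst z), (g ^^ n) (snd z))"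
  by (induction n) simp_all

lemma prob_mpt_map_prod:
  assumes "prob_mpt M T" "prob_mpt N U"
  shows "prob_mpt (M \<Otimes>\<^sub>M N) (map_prod T U)"
proof -
  interpret M: prob_mpt M T by fact
  interpret N: prob_mpt N U by fact
  have map_prod_eq: "map_prod T U = (\<lambda>(x, y). (T x, U y))"
    by (auto simp: fun_eq_iff)
  show ?thesis
  proof (intro prob_mpt.intro prob_mpt_axioms.intro)
    show "prob_space (M \<Otimes>\<^sub>M N)"
      by (rule prob_space_pair) unfold_locales
    show "map_prod T U \<in> measurable (M \<Otimes>\<^sub>M N) (M \<Otimes>\<^sub>M N)"
      unfolding map_prod_eq using M.measurable_map N.measurable_map by measurable
    have "sigma_finite_measure (distr N N U)"
      unfolding N.distr_map by unfold_locales
    then show "distr (M \<Otimes>\<^sub>M N) (M \<Otimes>\<^sub>M N) (map_prod T U) = M \<Otimes>\<^sub>M N"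
      using pair_measure_distr[OF M.measurable_map N.measurable_map] M.distr_map N.distr_map
      by (simp add: map_prod_eq)
  qed
qed

lemma dist_less_eq_Union_balls:
  fixes D :: "'a::metric_space set"
  assumes dense: "closure D = UNIV"
  shows "{w. dist (fst w) (snd w) < r}
    = (\<Union>(q, a, b)\<in>{(q, a, b). q \<in> D \<and> a \<in> \<rat> \<and> b \<in> \<rat> \<and> 0 < a \<and> 0 < b \<and> a + b < r}. ball q a \<times> ball q b)"
proof (intro equalityI subsetI)
  fix w :: "'a \<times> 'a"
  assume "w \<in> {w. dist (fst w) (snd w) < r}"
  then obtain u v where w: "w = (u, v)" "dist u v < r" by (cases w) auto
  define \<delta> where "\<delta> = r - dist u v"
  have \<delta>: "0 < \<delta>" using w by (simp add: \<delta>_def)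
  have "0 < \<delta> / 4" using \<delta> by simp
  then have "\<exists>q\<in>D. dist q u < \<delta> / 4"
    using dense closure_approachable[of u D] by blast
  then obtain q where q: "q \<in> D" "dist q u < \<delta> / 4" by blast
  obtain a where a: "a \<in> \<rat>" "\<delta> / 4 < a" "a < \<delta> / 2"
    using Rats_dense_in_real[of "\<delta> / 4" "\<delta> / 2"] \<delta> by auto
  obtain b where b: "b \<in> \<rat>" "dist u v + \<delta> / 4 < b" "b < dist u v + \<delta> / 2"
    using Rats_dense_in_real[of "dist u v + \<delta> / 4" "dist u v + \<delta> / 2"] \<delta> by auto
  have "dist q v \<le> dist q u + dist u v" by (rule dist_triangle)
  then have "dist q v < b" using q(2) b(2) by linarith
  moreover have "dist q u < a" using q(2) a(2) by linarith
  ultimately have "w \<in> ball q a \<times> ball q b" by (simp add: w)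
  moreover have "0 < a" "0 < b"
    using a(2) b(2) \<delta> zero_le_dist[of u v] by linarith+
  moreover have "a + b < \<delta> / 2 + (dist u v + \<delta> / 2)"
    using a(3) b(3) by linarith
  then have "a + b < r" by (simp add: \<delta>_def)
  ultimately show "w \<in> (\<Union>(q, a, b)\<in>{(q, a, b). q \<in> D \<and> a \<in> \<rat> \<and> b \<in> \<rat> \<and> 0 < a \<and> 0 < b \<and> a + b < r}. ball q a \<times> ball q b)"
    using q(1) a(1) b(1) by blast
next
  fix w :: "'a \<times> 'a"
  assume "w \<in> (\<Union>(q, a, b)\<in>{(q, a, b). q \<in> D \<and> a \<in> \<rat> \<and> b \<in> \<rat> \<and> 0 < a \<and> 0 < b \<and> a + b < r}. ball q a \<times> ball q b)"
  then obtain q a b where "a + b < r" "dist q (fst w) < a" "dist q (snd w) < b" by auto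
  with dist_triangle3[of "fst w" "snd w" q] show "w \<in> {w. dist (fst w) (snd w) < r}" by simp
qed

text \<open>Separability is needed: the product \<sigma>-algebra can be strictly smaller than the Borel
  \<sigma>-algebra of X \<times> X, and the distance need not be measurable for it.\<close>
lemma borel_measurable_dist_separable:
  assumes "separable_space (euclidean :: 'a::metric_space topology)"
  shows "(\<lambda>w::'a \<times> 'a. dist (fst w) (snd w)) \<in> borel_measurable (borel \<Otimes>\<^sub>M borel)"
proof (rule borel_measurable_iff_less[THEN iffD2], intro allI)
  fix r :: real
  obtain D :: "'a set" where D: "countable D" "closure D = UNIV"
    using assms by (auto simp: separable_space_def euclidean_closure_of)
  define I where "I = {(q, a, b). q \<in> D \<and> a \<in> \<rat> \<and> b \<in> \<rat> \<and> 0 < a \<and> 0 < b \<and> a + b < r}"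
  have "countable I"
    by (rule countable_subset[of _ "D \<times> \<rat> \<times> \<rat>"]) (auto simp: I_def D countable_rat)
  moreover have "{w \<in> space (borel \<Otimes>\<^sub>M borel :: ('a \<times> 'a) measure). dist (fst w) (snd w) < r}
      = (\<Union>(q, a, b)\<in>I. ball q a \<times> ball q b)"
    using dist_less_eq_Union_balls[OF D(2), of r] by (simp add: space_pair_measure I_def)
  ultimately show "{w \<in> space (borel \<Otimes>\<^sub>M borel :: ('a \<times> 'a) measure). dist (fst w) (snd w) < r}
      \<in> sets (borel \<Otimes>\<^sub>M borel)"
    by (auto intro!: sets.countable_UN' pair_measureI)
qed

lemma AE_gauges_zero_or_infinity:
  fixes T :: "'a::metric_space \<Rightarrow> 'a" and M N :: "'a measure" and s :: "nat \<Rightarrow> real"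
  assumes sep: "separable_space (euclidean :: 'a topology)"
    and T_meas: "T \<in> borel_measurable borel"
    and M_borel: "sets M = sets borel" and M_prob: "prob_space M" and M_inv: "T_invariant T M"
    and N_borel: "sets N = sets borel" and N_prob: "prob_space N" and N_inv: "T_invariant T N"
    and pos: "\<forall>\<^sub>F n in sequentially. 0 < s n" and jumpy: "two_jumpy s"
  shows "AE z in M \<Otimes>\<^sub>M N. gauge_phi s T (fst z) (snd z) \<in> {0, \<infinity>}
                         \<and> gauge_psi s T (fst z) (snd z) \<in> {0, \<infinity>}"
proof -
  have M: "prob_mpt M T"
    using M_prob M_inv T_meas M_borel by (intro prob_mpt_if_T_invariant) (simp_all cong: measurable_cong_sets)
  have N: "prob_mpt N T"
    using N_prob N_inv T_meas N_borel by (intro prob_mpt_if_T_invariant) (simp_all cong: measurable_cong_sets)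
  have N_id: "prob_mpt N id"
    using N_prob by (intro prob_mpt.intro prob_mpt_axioms.intro) (simp_all add: id_def)
  interpret phi: prob_mpt "M \<Otimes>\<^sub>M N" "map_prod T id" by (rule prob_mpt_map_prod[OF M N_id])
  interpret psi: prob_mpt "M \<Otimes>\<^sub>M N" "map_prod T T" by (rule prob_mpt_map_prod[OF M N])
  have dist: "(\<lambda>w. dist (fst w) (snd w)) \<in> borel_measurable (M \<Otimes>\<^sub>M N)"
    using borel_measurable_dist_separable[OF sep]
    by (simp cong: measurable_cong_sets add: sets_pair_measure_cong[OF M_borel N_borel])
  have "AE z in M \<Otimes>\<^sub>M N. liminf (\<lambda>n. ereal (s n * dist (fst ((map_prod T id ^^ n) z)) (snd ((map_prod T id ^^ n) z)))) \<in> {0, \<infinity>}"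
    by (rule phi.AE_liminf_scaled_orbit_zero_or_infinity[OF _ _ pos jumpy]) (use dist in auto)
  moreover have "AE z in M \<Otimes>\<^sub>M N. liminf (\<lambda>n. ereal (s n * dist (fst ((map_prod T T ^^ n) z)) (snd ((map_prod T T ^^ n) z)))) \<in> {0, \<infinity>}"
    by (rule psi.AE_liminf_scaled_orbit_zero_or_infinity[OF _ _ pos jumpy]) (use dist in auto)
  ultimately show ?thesis
    by eventually_elim (simp add: funpow_map_prod_apply gauge_phi_def gauge_psi_def)
qed

lemma two_jumpy_powr:
  assumes "0 < \<alpha>"
  shows "two_jumpy (\<lambda>n. real n powr \<alpha>)"
proof -
  have "(\<lambda>n. ereal (real (2 * n) powr \<alpha> / real n powr \<alpha>)) \<longlonglongrightarrow> ereal (2 powr \<alpha>)"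
    by (rule tendsto_eventually) (auto simp: eventually_sequentially powr_mult intro!: exI[of _ 1])
  then have "liminf (\<lambda>n. ereal (real (2 * n) powr \<alpha> / real n powr \<alpha>)) = ereal (2 powr \<alpha>)"
    by (rule lim_imp_Liminf[rotated]) simp
  then show ?thesis
    using assms by (auto simp: two_jumpy_def intro!: always_eventually powr_mono2)
qed

theorem theorem3p2:
  fixes T :: "'a::metric_space \<Rightarrow> 'a" and M N :: "'a measure" and s :: "nat \<Rightarrow> real"
  assumes sep: "separable_space (euclidean :: 'a topology)"
    and T_meas: "T \<in> borel_measurable borel"
    and M_borel: "sets M = sets borel" and M_prob: "prob_space M" and M_inv: "T_invariant T M"
    and N_borel: "sets N = sets borel" and N_prob: "prob_space N" and N_inv: "T_invariant T N"
    and scale: "scale_seq s" and jumpy: "two_jumpy s"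
  shows "(AE z in M \<Otimes>\<^sub>M N. gauge_phi s T (fst z) (snd z) \<in> {0, \<infinity>}
                         \<and> gauge_psi s T (fst z) (snd z) \<in> {0, \<infinity>})
    \<and> (\<forall>\<alpha>::real. \<alpha> > 0 \<longrightarrow>
         (AE z in M \<Otimes>\<^sub>M N. gauge_phi (\<lambda>n. real n powr \<alpha>) T (fst z) (snd z) \<in> {0, \<infinity>}
                          \<and> gauge_psi (\<lambda>n. real n powr \<alpha>) T (fst z) (snd z) \<in> {0, \<infinity>}))"
proof (intro conjI allI impI)
  note gauges = AE_gauges_zero_or_infinity[OF sep T_meas M_borel M_prob M_inv N_borel N_prob N_inv]
  show "AE z in M \<Otimes>\<^sub>M N. gauge_phi s T (fst z) (snd z) \<in> {0, \<infinity>}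
                         \<and> gauge_psi s T (fst z) (snd z) \<in> {0, \<infinity>}"
    using scale by (intro gauges[OF _ jumpy]) (auto simp: scale_seq_def eventually_sequentially)
  fix \<alpha> :: real
  assume "0 < \<alpha>"
  then show "AE z in M \<Otimes>\<^sub>M N. gauge_phi (\<lambda>n. real n powr \<alpha>) T (fst z) (snd z) \<in> {0, \<infinity>}
                          \<and> gauge_psi (\<lambda>n. real n powr \<alpha>) T (fst z) (snd z) \<in> {0, \<infinity>}"
    by (intro gauges[OF _ two_jumpy_powr]) (auto simp: eventually_sequentially intro!: exI[of _ 1])
qed

end
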